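(* Let $t_1$, $\ell_1$, $t_2$, and $\ell_2$ be positive integers. If $\ell_1 < 2t_1$, then there are only finitely many matroids (up to isomorphism) with the $(t_1,\ell_1,t_2,\ell_2)$-property. The same is true if $\ell_2 < 2t_2$.
   Context: A matroid has the $(t_1,\ell_1,t_2,\ell_2)$-property if every $t_1$-element subset of its ground set is contained in an $\ell_1$-element circuit, and every $t_2$-element subset of its ground set is contained in an $\ell_2$-element cocircuit. *)

theory Defs
  imports Main
begin

definition matroid :: "'a set \<Rightarrow> 'a set set \<Rightarrow> bool" where
  "matroid E I \<longleftrightarrow> finite E \<and> I \<subseteq> Pow E \<and> {} \<in> I
     \<and> (\<forall>X Y. Y \<in> I \<and> X \<subseteq> Y \<longrightarrow> X \<in> I)
     \<and> (\<forall>X Y. X \<in> I \<and> Y \<in> I \<and> card X < card Y \<longrightarrow> (\<exists>y\<in>Y - X. insert y X \<in> I))"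

definition circuit :: "'a set \<Rightarrow> 'a set set \<Rightarrow> 'a set \<Rightarrow> bool" where
  "circuit E I C \<longleftrightarrow> C \<subseteq> E \<and> C \<notin> I \<and> (\<forall>D. D \<subset> C \<longrightarrow> D \<in> I)"

definition basis :: "'a set set \<Rightarrow> 'a set \<Rightarrow> bool" where
  "basis I B \<longleftrightarrow> B \<in> I \<and> (\<forall>X\<in>I. B \<subseteq> X \<longrightarrow> X = B)"

definition dual_indep :: "'a set \<Rightarrow> 'a set set \<Rightarrow> 'a set set" where
  "dual_indep E I = {X. X \<subseteq> E \<and> (\<exists>B. basis I B \<and> X \<inter> B = {})}"

definition cocircuit :: "'a set \<Rightarrow> 'a set set \<Rightarrow> 'a set \<Rightarrow> bool" where
  "cocircuit E I C \<longleftrightarrow> circuit E (dual_indep E I) C"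

definition tl_property :: "nat \<Rightarrow> nat \<Rightarrow> nat \<Rightarrow> nat \<Rightarrow> 'a set \<Rightarrow> 'a set set \<Rightarrow> bool" where
  "tl_property t1 l1 t2 l2 E I \<longleftrightarrow>
     (\<forall>X. X \<subseteq> E \<and> card X = t1 \<longrightarrow> (\<exists>C. circuit E I C \<and> card C = l1 \<and> X \<subseteq> C)) \<and>
     (\<forall>X. X \<subseteq> E \<and> card X = t2 \<longrightarrow> (\<exists>C. cocircuit E I C \<and> card C = l2 \<and> X \<subseteq> C))"

definition matroid_iso :: "'a set \<Rightarrow> 'a set set \<Rightarrow> 'b set \<Rightarrow> 'b set set \<Rightarrow> bool" where
  "matroid_iso E I E' I' \<longleftrightarrow>
     (\<exists>f. bij_betw f E E' \<and> (\<forall>X. X \<subseteq> E \<longrightarrow> (X \<in> I \<longleftrightarrow> f ` X \<in> I')))"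

end

theory Submission
  imports Defs
begin

text \<open>
  By duality (circuits and cocircuits swap, and the dual of the dual is the matroid itself) it
  suffices to bound \<open>|E|\<close> when \<open>l\<^sub>1 < 2 t\<^sub>1\<close>. Every element lies in a cocircuit of size
  \<open>l\<^sub>2\<close>, so \<open>|E| \<le> l\<^sub>2 \<cdot> N\<close> where \<open>N\<close> is the number of cocircuits of size at most \<open>l\<^sub>2\<close>,
  and also \<open>|E| \<le> l\<^sub>2 \<cdot> r(E)\<close>. If \<open>N\<close> is large, the sunflower lemma gives many cocircuits
  pairwise meeting in a small kernel, and eliminating the kernel points one at a time by
  cocircuit elimination on pairs yields \<open>t\<^sub>1 - 1\<close> pairwise disjoint cocircuits of bounded size.
  These span the matroid: a circuit of size \<open>l\<^sub>1\<close> through an element \<open>f\<close> outside them and one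
  element of each meets each of them at least twice, by orthogonality, so \<open>l\<^sub>1 < 2 t\<^sub>1\<close> forces it
  into their union plus \<open>f\<close>. This bounds \<open>r(E)\<close>, hence \<open>|E|\<close>, and matroids of bounded size
  fall into finitely many isomorphism classes.
\<close>

section \<open>Finite set combinatorics\<close>

definition sunflower :: "'a set \<Rightarrow> 'a set set \<Rightarrow> bool" where
  "sunflower S P \<longleftrightarrow> (\<forall>A\<in>P. S \<subseteq> A) \<and> (\<forall>A\<in>P. \<forall>B\<in>P. A \<noteq> B \<longrightarrow> A \<inter> B \<subseteq> S)"

lemma sunflower_empty_kernel: "pairwise disjnt P \<Longrightarrow> sunflower {} P"
  by (auto simp: sunflower_def pairwise_def disjnt_def)

lemma sunflower_lift:
  assumes P: "P \<subseteq> (\<lambda>A. A - {u}) ` {A \<in> F. u \<in> A}" "card P = p" "sunflower S P"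
  shows "\<exists>S P. P \<subseteq> F \<and> card P = p \<and> sunflower S P"
proof (intro exI conjI)
  have "u \<notin> A" if "A \<in> P" for A
    using P(1) that by blast
  then have "inj_on (insert u) P"
    by (intro inj_onI) (metis insert_ident)
  then show "card (insert u ` P) = p"
    using P(2) by (simp add: card_image)
  show "insert u ` P \<subseteq> F"
  proof
    fix B assume "B \<in> insert u ` P"
    then obtain A where "A \<in> F" "u \<in> A" "B = insert u (A - {u})"
      using P(1) by auto
    then show "B \<in> F"
      by (simp add: insert_absorb)
  qed
  show "sunflower (insert u S) (insert u ` P)"
    using P(3) unfolding sunflower_def by blast
qed

lemma obtain_hitting_set:
  assumes F: "finite F" "\<And>A. A \<in> F \<Longrightarrow> finite A \<and> card A \<le> k"
    and no_disjoint: "\<nexists>P. P \<subseteq> F \<and> pairwise disjnt P \<and> card P = p"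
  obtains U where "finite U" "card U \<le> (p - 1) * k" "\<And>A. A \<in> F \<Longrightarrow> A \<noteq> {} \<Longrightarrow> A \<inter> U \<noteq> {}"
proof -
  have small: "card P < p" if "P \<subseteq> F" "pairwise disjnt P" for P
  proof (rule ccontr)
    assume "\<not> card P < p"
    then obtain P' where P': "P' \<subseteq> P" "card P' = p"
      using obtain_subset_with_card_n[of p P] by auto
    moreover have "pairwise disjnt P'"
      using that(2) P'(1) by (rule pairwise_subset)
    ultimately show False
      using no_disjoint that(1) by blast
  qed
  let ?D = "\<lambda>G. G \<subseteq> F \<and> pairwise disjnt G"
  have "card G < Suc (card F)" if "?D G" for G
    using that card_mono[OF F(1)] by (simp add: less_Suc_eq_le)
  then obtain G where G: "?D G" and max: "\<And>G'. ?D G' \<Longrightarrow> card G' \<le> card G"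
    using Lattices_Big.ex_has_greatest_nat[of ?D "{}" card "Suc (card F)"] by auto
  have finG: "finite G"
    using G F(1) finite_subset by blast
  have "card (\<Union>G) \<le> (\<Sum>A\<in>G. card A)"
    by (rule card_Union_le_sum_card)
  also have "\<dots> \<le> card G * k"
    using G F(2) sum_bounded_above[of G card k] by auto
  also have "\<dots> \<le> (p - 1) * k"
    using small[of G] G by (intro mult_le_mono1) simp
  finally have "card (\<Union>G) \<le> (p - 1) * k" .
  moreover have "finite (\<Union>G)"
    using finG G F(2) by blast
  moreover have "A \<inter> \<Union>G \<noteq> {}" if "A \<in> F" "A \<noteq> {}" for A
  proof
    assume disj: "A \<inter> \<Union>G = {}"
    then have "A \<notin> G"
      using \<open>A \<noteq> {}\<close> by blast
    moreover have "?D (insert A G)"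
      using G \<open>A \<in> F\<close> disj by (auto simp: pairwise_insert disjnt_def)
    ultimately show False
      using max[of "insert A G"] finG by simp
  qed
  ultimately show ?thesis
    using that by blast
qed

lemma sunflower_bound_step:
  fixes p k :: nat
  assumes "1 \<le> p"
  shows "(p - 1) * Suc k * (fact k * p ^ k) + 1 \<le> fact (Suc k) * p ^ Suc k"
proof -
  obtain q where p: "p = Suc q"
    using assms by (cases p) auto
  have step: "q * Suc k * Q + 1 \<le> Suc k * (Suc q * Q)" if "1 \<le> Q" for Q :: nat
    using that by (simp add: algebra_simps)
  have "1 \<le> fact k * p ^ k"
    using p by (simp add: Suc_le_eq)
  moreover have "fact (Suc k) * p ^ Suc k = Suc k * (p * (fact k * p ^ k))"
    by (simp add: algebra_simps)
  ultimately show ?thesis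
    using step[of "fact k * p ^ k"] by (simp add: p)
qed

lemma ex_popular_element:
  assumes F: "finite F" "fact (Suc k) * p ^ Suc k < card F"
    and U: "finite U" "card U \<le> (p - 1) * Suc k" "\<And>A. A \<in> F \<Longrightarrow> A \<noteq> {} \<Longrightarrow> A \<inter> U \<noteq> {}"
    and "1 \<le> p"
  shows "\<exists>u. fact k * p ^ k < card {A \<in> F. u \<in> A}"
proof (rule ccontr)
  let ?Q = "fact k * p ^ k"
  assume "\<nexists>u. ?Q < card {A \<in> F. u \<in> A}"
  then have "(\<Sum>u\<in>U. card {A \<in> F. u \<in> A}) \<le> card U * ?Q"
    using sum_bounded_above[of U "\<lambda>u. card {A \<in> F. u \<in> A}" ?Q] by (simp add: not_less)
  moreover have "card F \<le> card (\<Union>u\<in>U. {A \<in> F. u \<in> A}) + 1"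
  proof -
    have fin: "finite (\<Union>u\<in>U. {A \<in> F. u \<in> A})"
      using F(1) by (rule finite_subset[rotated]) blast
    have "F \<subseteq> insert {} (\<Union>u\<in>U. {A \<in> F. u \<in> A})"
      using U(3) by blast
    then have "card F \<le> card (insert {} (\<Union>u\<in>U. {A \<in> F. u \<in> A}))"
      using fin by (intro card_mono) auto
    also have "\<dots> \<le> card (\<Union>u\<in>U. {A \<in> F. u \<in> A}) + 1"
      using fin by (simp add: card_insert_if)
    finally show ?thesis .
  qed
  moreover have "card (\<Union>u\<in>U. {A \<in> F. u \<in> A}) \<le> (\<Sum>u\<in>U. card {A \<in> F. u \<in> A})"
    using U(1) by (rule card_UN_le)
  ultimately have "card F \<le> (p - 1) * Suc k * ?Q + 1"
    using mult_le_mono1[OF U(2), of ?Q] by linarith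
  with sunflower_bound_step[OF \<open>1 \<le> p\<close>, of k] F(2) show False
    by linarith
qed

theorem sunflower_lemma:
  assumes "finite F" "\<And>A. A \<in> F \<Longrightarrow> finite A \<and> card A \<le> k" "fact k * p ^ k < card F"
  shows "\<exists>S P. P \<subseteq> F \<and> card P = p \<and> sunflower S P"
  using assms
proof (induction k arbitrary: F)
  case 0
  then have "F \<subseteq> {{}}"
    by (auto simp: card_eq_0_iff)
  then have "card F \<le> 1"
    using card_mono[of "{{}}" F] by simp
  with "0.prems"(3) show ?case
    by simp
next
  case (Suc k)
  show ?case
  proof (cases "\<exists>P \<subseteq> F. pairwise disjnt P \<and> card P = p")
    case True
    then show ?thesis
      using sunflower_empty_kernel by blast
  next
    case False
    have "1 \<le> p"
    proof (rule ccontr)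
      assume "\<not> 1 \<le> p"
      then have "{} \<subseteq> F \<and> pairwise disjnt {} \<and> card {} = p"
        by simp
      with False show False
        by blast
    qed
    obtain U where U: "finite U" "card U \<le> (p - 1) * Suc k"
      and hit: "\<And>A. A \<in> F \<Longrightarrow> A \<noteq> {} \<Longrightarrow> A \<inter> U \<noteq> {}"
      using obtain_hitting_set[OF Suc.prems(1,2)] False by blast
    define F\<^sub>u where "F\<^sub>u u = {A \<in> F. u \<in> A}" for u
    obtain u where u: "fact k * p ^ k < card (F\<^sub>u u)"
      using ex_popular_element[OF Suc.prems(1,3) U hit \<open>1 \<le> p\<close>] by (auto simp: F\<^sub>u_def)
    have inj: "inj_on (\<lambda>A. A - {u}) (F\<^sub>u u)"
      by (rule inj_onI) (auto simp: F\<^sub>u_def)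
    have "\<exists>S P. P \<subseteq> (\<lambda>A. A - {u}) ` F\<^sub>u u \<and> card P = p \<and> sunflower S P"
    proof (rule Suc.IH)
      show "finite ((\<lambda>A. A - {u}) ` F\<^sub>u u)"
        using Suc.prems(1) by (simp add: F\<^sub>u_def)
      show "finite A \<and> card A \<le> k" if "A \<in> (\<lambda>A. A - {u}) ` F\<^sub>u u" for A
        using that Suc.prems(2) by (force simp: F\<^sub>u_def)
      show "fact k * p ^ k < card ((\<lambda>A. A - {u}) ` F\<^sub>u u)"
        using u by (simp add: card_image[OF inj])
    qed
    then obtain S P where "P \<subseteq> (\<lambda>A. A - {u}) ` {A \<in> F. u \<in> A}" "card P = p" "sunflower S P"
      unfolding F\<^sub>u_def by blast
    then show ?thesis
      by (rule sunflower_lift)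
  qed
qed

lemma obtain_pairing:
  assumes "finite X" "2 * m \<le> card X"
  obtains P g where "P \<subseteq> X" "card P = m" "inj_on g P" "g ` P \<subseteq> X - P"
proof -
  obtain P where P: "P \<subseteq> X" "card P = m"
    using obtain_subset_with_card_n[of m X] assms(2) by auto
  have "m \<le> card (X - P)"
    using P assms by (simp add: card_Diff_subset finite_subset)
  then obtain Q where Q: "Q \<subseteq> X - P" "card Q = m"
    using obtain_subset_with_card_n[of m "X - P"] by auto
  have "finite P" "finite Q"
    using P(1) Q(1) assms(1) finite_subset by blast+
  then obtain g where "bij_betw g P Q"
    using finite_same_card_bij[of P Q] P(2) Q(2) by auto
  with P Q that show ?thesis
    by (auto simp: bij_betw_def)
qed

lemma ex_transversal:
  assumes "finite DD" "pairwise disjnt DD" "{} \<notin> DD"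
  shows "\<exists>T. T \<subseteq> \<Union>DD \<and> card T = card DD \<and> (\<forall>D\<in>DD. T \<inter> D \<noteq> {})"
proof -
  define pick where "pick D = (SOME x. x \<in> D)" for D :: "'a set"
  have pick: "pick D \<in> D" if "D \<in> DD" for D
  proof -
    have "D \<noteq> {}"
      using that assms(3) by blast
    then show ?thesis
      by (simp add: pick_def some_in_eq)
  qed
  have "inj_on pick DD"
  proof (rule inj_onI)
    fix D D' assume "D \<in> DD" "D' \<in> DD" "pick D = pick D'"
    then show "D = D'"
      using pick[of D] pick[of D'] assms(2) by (auto simp: pairwise_def disjnt_def)
  qed
  then have "card (pick ` DD) = card DD"
    by (rule card_image)
  moreover have "pick ` DD \<subseteq> \<Union>DD" "\<forall>D\<in>DD. pick ` DD \<inter> D \<noteq> {}"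
    using pick by blast+
  ultimately show ?thesis
    by blast
qed

section \<open>Rank and closure\<close>

locale matroid_on =
  fixes E :: "'a set" and I :: "'a set set"
  assumes matroid: "matroid E I"
begin

lemma finite_E: "finite E"
  and indep_subset_E: "X \<in> I \<Longrightarrow> X \<subseteq> E"
  and empty_indep: "{} \<in> I"
  and indep_subset: "Y \<in> I \<Longrightarrow> X \<subseteq> Y \<Longrightarrow> X \<in> I"
  and indep_augment: "X \<in> I \<Longrightarrow> Y \<in> I \<Longrightarrow> card X < card Y \<Longrightarrow> \<exists>y\<in>Y - X. insert y X \<in> I"
  using matroid unfolding matroid_def by blast+

lemma finite_subset_E: "X \<subseteq> E \<Longrightarrow> finite X"
  by (rule finite_subset[OF _ finite_E])

lemma indep_finite: "X \<in> I \<Longrightarrow> finite X"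
  by (rule finite_subset_E[OF indep_subset_E])

definition rank :: "'a set \<Rightarrow> nat" where
  "rank X = Max (card ` {Y. Y \<subseteq> X \<and> Y \<in> I})"

lemma finite_indep_subsets: "finite {Y. Y \<subseteq> X \<and> Y \<in> I}"
  by (rule finite_subset[of _ "Pow E"]) (use indep_subset_E finite_E in auto)

lemma card_le_rank: "Y \<subseteq> X \<Longrightarrow> Y \<in> I \<Longrightarrow> card Y \<le> rank X"
  unfolding rank_def using finite_indep_subsets by (intro Max_ge) blast+

lemma obtain_rank_indep:
  obtains Y where "Y \<subseteq> X" "Y \<in> I" "card Y = rank X"
proof -
  have "rank X \<in> card ` {Y. Y \<subseteq> X \<and> Y \<in> I}"
    unfolding rank_def using empty_indep
    by (intro Max_in finite_imageI finite_indep_subsets) blast+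
  then obtain Y where "Y \<in> {Y. Y \<subseteq> X \<and> Y \<in> I}" "rank X = card Y"
    by (rule imageE)
  then show ?thesis using that by force
qed

lemma rank_le_card: "finite X \<Longrightarrow> rank X \<le> card X"
  by (rule obtain_rank_indep[of X]) (metis card_mono)

lemma rank_mono: "X \<subseteq> Y \<Longrightarrow> rank X \<le> rank Y"
  by (rule obtain_rank_indep[of X]) (metis card_le_rank subset_trans)

lemma rank_indep: "X \<in> I \<Longrightarrow> rank X = card X"
  by (simp add: card_le_rank indep_finite le_antisym rank_le_card)

lemma rank_insert_le: "rank (insert x X) \<le> Suc (rank X)"
proof -
  obtain Y where Y: "Y \<subseteq> insert x X" "Y \<in> I" "card Y = rank (insert x X)"
    by (rule obtain_rank_indep)
  have "card (Y - {x}) \<le> rank X"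
    using Y by (intro card_le_rank) (auto intro: indep_subset)
  moreover have "card Y \<le> Suc (card (Y - {x}))"
    using indep_finite[OF Y(2)] by (cases "x \<in> Y") (simp_all add: card_Diff_singleton_if)
  ultimately show ?thesis using Y(3) by simp
qed

lemma rank_Un_le: "finite B \<Longrightarrow> rank (A \<union> B) \<le> rank A + card B"
proof (induction B rule: finite_induct)
  case (insert x B)
  then show ?case using rank_insert_le[of x "A \<union> B"] by simp
qed simp

lemma indep_extend_rank:
  assumes "J \<in> I" "J \<subseteq> Y"
  obtains J' where "J \<subseteq> J'" "J' \<subseteq> Y" "J' \<in> I" "card J' = rank Y"
proof -
  let ?P = "\<lambda>J'. J \<subseteq> J' \<and> J' \<subseteq> Y \<and> J' \<in> I"
  have "card J' < Suc (rank Y)" if "?P J'" for J'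
    using that by (intro le_imp_less_Suc card_le_rank) simp_all
  then have "\<exists>J'. ?P J' \<and> (\<forall>K. ?P K \<longrightarrow> card K \<le> card J')"
    using Lattices_Big.ex_has_greatest_nat[of ?P J card "Suc (rank Y)"] assms by blast
  then obtain J' where J': "?P J'" and max: "\<And>K. ?P K \<Longrightarrow> card K \<le> card J'"
    by blast
  obtain K where K: "K \<subseteq> Y" "K \<in> I" "card K = rank Y"
    by (rule obtain_rank_indep)
  have "\<not> card J' < card K"
  proof
    assume "card J' < card K"
    then obtain y where y: "y \<in> K - J'" "insert y J' \<in> I"
      using indep_augment J' K(2) by blast
    have "card (insert y J') \<le> card J'"
      using y J' K(1) by (intro max) auto
    then show False
      using y(1) indep_finite[OF y(2)] by simp
  qed
  then have "card J' = rank Y"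
    using J' K(3) card_le_rank[of J' Y] by simp
  with J' show ?thesis
    using that by blast
qed

definition closure :: "'a set \<Rightarrow> 'a set" where
  "closure X = {x \<in> E. rank (insert x X) = rank X}"

lemma notin_closure_iff:
  assumes J: "J \<subseteq> X" "J \<in> I" "card J = rank X" and "x \<in> E"
  shows "x \<notin> closure X \<longleftrightarrow> x \<notin> X \<and> insert x J \<in> I"
proof
  assume x: "x \<notin> closure X"
  then have "x \<notin> X"
    using \<open>x \<in> E\<close> insert_absorb[of x X] by (auto simp: closure_def)
  have "J \<subseteq> insert x X"
    using J(1) by blast
  with J(2) obtain J' where J': "J \<subseteq> J'" "J' \<subseteq> insert x X" "J' \<in> I" "card J' = rank (insert x X)"
    by (rule indep_extend_rank)
  have "rank X < rank (insert x X)"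
    using x \<open>x \<in> E\<close> rank_mono[OF subset_insertI, of X x] by (simp add: closure_def)
  moreover have "card (J' - {x}) \<le> rank X"
    using J' by (intro card_le_rank) (auto intro: indep_subset)
  ultimately have "x \<in> J'"
    using J'(4) by (cases "x \<in> J'") auto
  then show "x \<notin> X \<and> insert x J \<in> I"
    using \<open>x \<notin> X\<close> J'(1,3) by (blast intro: indep_subset)
next
  assume x: "x \<notin> X \<and> insert x J \<in> I"
  then have "x \<notin> J"
    using J(1) by blast
  then have "card (insert x J) = Suc (rank X)"
    using J(3) indep_finite[OF J(2)] by simp
  moreover have "card (insert x J) \<le> rank (insert x X)"
    using x J(1) by (intro card_le_rank) auto
  ultimately have "rank X < rank (insert x X)"
    by simp
  then show "x \<notin> closure X"
    by (simp add: closure_def)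
qed

lemma closure_subset_E: "closure X \<subseteq> E"
  by (auto simp: closure_def)

lemma subset_closure: "X \<subseteq> E \<Longrightarrow> X \<subseteq> closure X"
  by (simp add: closure_def subset_iff insert_absorb)

lemma closure_mono:
  assumes "X \<subseteq> Y" shows "closure X \<subseteq> closure Y"
proof
  fix x assume x: "x \<in> closure X"
  obtain J where J: "J \<subseteq> X" "J \<in> I" "card J = rank X"
    by (rule obtain_rank_indep)
  have "J \<subseteq> Y"
    using J(1) assms by blast
  with J(2) obtain J' where J': "J \<subseteq> J'" "J' \<subseteq> Y" "J' \<in> I" "card J' = rank Y"
    by (rule indep_extend_rank)
  have "x \<in> E" using x closure_subset_E by blast
  show "x \<in> closure Y"
  proof (rule ccontr)
    assume "x \<notin> closure Y"
    then have "x \<notin> Y \<and> insert x J' \<in> I"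
      using notin_closure_iff[OF J'(2-4) \<open>x \<in> E\<close>] by blast
    then have "x \<notin> X \<and> insert x J \<in> I"
      using assms J'(1) indep_subset[of "insert x J'" "insert x J"] by blast
    then show False
      using x notin_closure_iff[OF J \<open>x \<in> E\<close>] by blast
  qed
qed

lemma insert_indep_if_notin_closure:
  "J \<in> I \<Longrightarrow> x \<in> E \<Longrightarrow> x \<notin> closure J \<Longrightarrow> insert x J \<in> I"
  using notin_closure_iff[of J J x] rank_indep by simp

lemma rank_Un_closure: "finite A \<Longrightarrow> A \<subseteq> closure X \<Longrightarrow> rank (X \<union> A) = rank X"
proof (induction A rule: finite_induct)
  case (insert a A)
  then have "a \<in> closure (X \<union> A)"
    using closure_mono[of X "X \<union> A"] by blast
  then show ?case using insert by (simp add: closure_def)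
qed simp

lemma rank_closure: "X \<subseteq> E \<Longrightarrow> rank (closure X) = rank X"
proof -
  assume "X \<subseteq> E"
  have "rank (closure X) \<le> rank (X \<union> closure X)" by (rule rank_mono) blast
  also have "\<dots> = rank X"
    by (rule rank_Un_closure[OF finite_subset_E[OF closure_subset_E] subset_refl])
  finally show ?thesis
    using rank_mono[OF subset_closure[OF \<open>X \<subseteq> E\<close>]] by simp
qed

lemma closure_exchange:
  assumes "x \<in> E" "y \<in> closure (insert x X)" "y \<notin> closure X"
  shows "x \<in> closure (insert y X)"
proof (rule ccontr)
  assume "x \<notin> closure (insert y X)"
  then have "rank (insert y X) < rank (insert x (insert y X))"
    using assms(1) rank_mono[OF subset_insertI, of "insert y X" x] by (simp add: closure_def)
  moreover have "rank X < rank (insert y X)"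
    using assms(2,3) rank_mono[OF subset_insertI, of X y] closure_subset_E by (auto simp: closure_def)
  moreover have "rank (insert x (insert y X)) = rank (insert x X)"
    using assms(2) by (simp add: closure_def insert_commute)
  ultimately show False
    using rank_insert_le[of x X] by linarith
qed

section \<open>Bases and duality\<close>

lemma basis_iff_card: "basis I B \<longleftrightarrow> B \<in> I \<and> card B = rank E"
proof
  assume B: "basis I B"
  then have "B \<in> I" by (simp add: basis_def)
  moreover from this have "B \<subseteq> E" by (rule indep_subset_E)
  ultimately obtain B' where B': "B \<subseteq> B'" "B' \<subseteq> E" "B' \<in> I" "card B' = rank E"
    by (rule indep_extend_rank)
  with B have "B' = B"
    by (simp add: basis_def)
  with B' \<open>B \<in> I\<close> show "B \<in> I \<and> card B = rank E"
    by simp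
next
  assume B: "B \<in> I \<and> card B = rank E"
  have "X = B" if "X \<in> I" "B \<subseteq> X" for X
    using that B card_le_rank[OF indep_subset_E] indep_finite
    by (metis card_subset_eq le_antisym card_mono)
  with B show "basis I B"
    by (simp add: basis_def)
qed

lemma basis_indep: "basis I B \<Longrightarrow> B \<in> I"
  by (simp add: basis_def)

lemma obtain_basis_superset:
  assumes "X \<in> I"
  obtains B where "basis I B" "X \<subseteq> B"
proof -
  from assms indep_subset_E[OF assms] obtain B where "X \<subseteq> B" "B \<subseteq> E" "B \<in> I" "card B = rank E"
    by (rule indep_extend_rank)
  with that show ?thesis
    by (simp add: basis_iff_card)
qed

lemma dual_indep_iff: "X \<in> dual_indep E I \<longleftrightarrow> X \<subseteq> E \<and> rank (E - X) = rank E"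
proof
  assume "X \<in> dual_indep E I"
  then obtain B where "X \<subseteq> E" "basis I B" "X \<inter> B = {}"
    by (auto simp: dual_indep_def)
  moreover from this have "card B \<le> rank (E - X)"
    using indep_subset_E by (intro card_le_rank) (auto simp: basis_iff_card)
  ultimately show "X \<subseteq> E \<and> rank (E - X) = rank E"
    using rank_mono[of "E - X" E] by (auto simp: basis_iff_card)
next
  assume X: "X \<subseteq> E \<and> rank (E - X) = rank E"
  obtain B where "B \<subseteq> E - X" "B \<in> I" "card B = rank (E - X)"
    by (rule obtain_rank_indep)
  with X show "X \<in> dual_indep E I"
    by (auto simp: dual_indep_def basis_iff_card)
qed

lemma dual_indep_if_disjoint_basis:
  assumes "X \<subseteq> E" "B \<subseteq> E - X" "B \<in> I" "card B = rank E"
  shows "X \<in> dual_indep E I"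
  using assms card_le_rank[of B "E - X"] rank_mono[of "E - X" E] by (auto simp: dual_indep_iff)

lemma dual_indep_augment:
  assumes X: "X \<in> dual_indep E I" and Y: "Y \<in> dual_indep E I" and "card X < card Y"
  shows "\<exists>y\<in>Y - X. insert y X \<in> dual_indep E I"
proof (rule ccontr)
  assume no_aug: "\<not> (\<exists>y\<in>Y - X. insert y X \<in> dual_indep E I)"
  have XE: "X \<subseteq> E" and rX: "rank (E - X) = rank E"
    and YE: "Y \<subseteq> E" and rY: "rank (E - Y) = rank E"
    using X Y by (simp_all add: dual_indep_iff)
  define W where "W = E - (X \<union> Y)"
  obtain J where J: "J \<subseteq> W" "J \<in> I" "card J = rank W"
    by (rule obtain_rank_indep)
  have "J \<subseteq> E - X"
    using J(1) unfolding W_def by blast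
  with J(2) obtain J' where J': "J \<subseteq> J'" "J' \<subseteq> E - X" "J' \<in> I" "card J' = rank E"
    using rX by (metis indep_extend_rank)
  have "Y - X \<subseteq> J'"
  proof
    fix y assume "y \<in> Y - X"
    with no_aug have "insert y X \<notin> dual_indep E I"
      by blast
    with \<open>y \<in> Y - X\<close> show "y \<in> J'"
      using dual_indep_if_disjoint_basis[of "insert y X" J'] J' XE YE by blast
  qed
  have "rank W + card (Y - X) = card (J \<union> (Y - X))"
    using J indep_finite finite_subset_E YE unfolding W_def
    by (subst card_Un_disjoint) (auto intro: finite_subset)
  also have "\<dots> \<le> rank E"
    using J'(1,3,4) \<open>Y - X \<subseteq> J'\<close> indep_finite by (metis card_mono Un_least)
  also have "\<dots> \<le> rank W + card (X - Y)"
  proof -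
    have "E - Y = W \<union> (X - Y)"
      using XE by (auto simp: W_def)
    then show ?thesis
      using rY rank_Un_le[of "X - Y" W] finite_subset_E XE by (simp add: subset_iff)
  qed
  finally have "card (Y - X) \<le> card (X - Y)"
    by simp
  then have "card Y \<le> card X"
    using card_Int_Diff[of Y X] card_Int_Diff[of X Y] finite_subset_E XE YE
    by (simp add: Int_commute)
  with \<open>card X < card Y\<close> show False
    by simp
qed

lemma matroid_dual: "matroid E (dual_indep E I)"
  unfolding matroid_def
proof (intro conjI allI impI)
  show "{} \<in> dual_indep E I"
    by (simp add: dual_indep_iff)
  fix X Y
  assume "X \<in> dual_indep E I \<and> Y \<in> dual_indep E I \<and> card X < card Y"
  then show "\<exists>y\<in>Y - X. insert y X \<in> dual_indep E I"
    using dual_indep_augment by blast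
qed (auto simp: finite_E dual_indep_def)

lemma basis_dual_iff: "basis (dual_indep E I) B' \<longleftrightarrow> (\<exists>B. basis I B \<and> B' = E - B)"
proof
  assume B': "basis (dual_indep E I) B'"
  then obtain B where B: "basis I B" "B' \<inter> B = {}" and "B' \<subseteq> E"
    by (auto simp: basis_def dual_indep_def)
  then have "B' \<subseteq> E - B" by blast
  moreover have "E - B \<in> dual_indep E I"
    using B(1) by (auto simp: dual_indep_def)
  ultimately have "E - B = B'"
    using B' by (simp add: basis_def)
  with B(1) show "\<exists>B. basis I B \<and> B' = E - B"
    by blast
next
  assume "\<exists>B. basis I B \<and> B' = E - B"
  then obtain B where B: "basis I B" and B': "B' = E - B"
    by blast
  have "Z = E - B" if Z: "Z \<in> dual_indep E I" "E - B \<subseteq> Z" for Z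
  proof -
    from Z(1) obtain B'' where B'': "basis I B''" "Z \<inter> B'' = {}" and "Z \<subseteq> E"
      by (auto simp: dual_indep_def)
    then have "B'' \<subseteq> B"
      using Z(2) indep_subset_E[OF basis_indep] by blast
    then have "B'' = B"
      using B B'' by (simp add: basis_def)
    with B'' \<open>Z \<subseteq> E\<close> Z(2) show ?thesis
      by blast
  qed
  moreover have "E - B \<in> dual_indep E I"
    using B by (auto simp: dual_indep_def)
  ultimately show "basis (dual_indep E I) B'"
    unfolding B' basis_def by blast
qed

lemma dual_dual: "dual_indep E (dual_indep E I) = I"
proof (intro set_eqI iffI)
  fix X assume "X \<in> dual_indep E (dual_indep E I)"
  then obtain B' where "X \<subseteq> E" "basis (dual_indep E I) B'" "X \<inter> B' = {}"
    unfolding dual_indep_def[of E "dual_indep E I"] by blast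
  then obtain B where "basis I B" "X \<subseteq> B"
    unfolding basis_dual_iff by blast
  then show "X \<in> I"
    by (blast intro: indep_subset basis_indep)
next
  fix X assume "X \<in> I"
  then obtain B where "basis I B" "X \<subseteq> B"
    by (rule obtain_basis_superset)
  moreover have "X \<subseteq> E"
    using \<open>X \<in> I\<close> by (rule indep_subset_E)
  ultimately show "X \<in> dual_indep E (dual_indep E I)"
    unfolding dual_indep_def[of E "dual_indep E I"] basis_dual_iff by blast
qed

lemma cocircuit_dual: "cocircuit E (dual_indep E I) = circuit E I"
  by (simp add: cocircuit_def dual_dual fun_eq_iff)

lemma tl_property_dual:
  "tl_property t1 l1 t2 l2 E I \<Longrightarrow> tl_property t2 l2 t1 l1 E (dual_indep E I)"
  unfolding tl_property_def cocircuit_dual by (simp add: cocircuit_def)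

section \<open>Circuits and cocircuits\<close>

lemma subset_closure_if_rank_indep:
  assumes "J \<subseteq> X" "J \<in> I" "card J = rank X" "X \<subseteq> E"
  shows "X \<subseteq> closure J"
proof
  fix x assume "x \<in> X"
  show "x \<in> closure J"
  proof (rule ccontr)
    assume "x \<notin> closure J"
    then have "x \<notin> J" "insert x J \<in> I"
      using notin_closure_iff[of J J x] \<open>x \<in> X\<close> assms rank_indep by auto
    then have "card (insert x J) \<le> card J"
      using card_le_rank[of "insert x J" X] \<open>x \<in> X\<close> assms by simp
    with \<open>x \<notin> J\<close> show False
      using indep_finite[OF assms(2)] by simp
  qed
qed

lemma cocircuit_subset_E: "cocircuit E I D \<Longrightarrow> D \<subseteq> E"
  by (simp add: cocircuit_def circuit_def)

lemma cocircuit_nonempty: "cocircuit E I D \<Longrightarrow> D \<noteq> {}"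
  by (auto simp: cocircuit_def circuit_def dual_indep_iff)

lemma cocircuit_notin_closure:
  assumes D: "cocircuit E I D" and "d \<in> D"
  shows "d \<notin> closure (E - D)"
proof -
  have "D - {d} \<in> dual_indep E I" "D \<notin> dual_indep E I" "D \<subseteq> E"
    using D \<open>d \<in> D\<close> by (auto simp: cocircuit_def circuit_def)
  moreover have "E - (D - {d}) = insert d (E - D)"
    using \<open>d \<in> D\<close> \<open>D \<subseteq> E\<close> by blast
  ultimately show ?thesis
    by (auto simp: dual_indep_iff closure_def)
qed

lemma circuit_in_closure:
  assumes C: "circuit E I C" and "x \<in> C"
  shows "x \<in> closure (C - {x})"
proof (rule ccontr)
  have "C - {x} \<in> I" "C \<notin> I" "C \<subseteq> E"
    using C \<open>x \<in> C\<close> by (auto simp: circuit_def)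
  moreover assume "x \<notin> closure (C - {x})"
  ultimately have "insert x (C - {x}) \<in> I"
    using notin_closure_iff[of "C - {x}" "C - {x}" x] \<open>x \<in> C\<close> rank_indep by auto
  with \<open>C \<notin> I\<close> \<open>x \<in> C\<close> show False
    by (simp add: insert_absorb)
qed

lemma circuit_Int_cocircuit_not_singleton:
  assumes C: "circuit E I C" and D: "cocircuit E I D"
  shows "C \<inter> D \<noteq> {e}"
proof
  assume CD: "C \<inter> D = {e}"
  then have "C - {e} \<subseteq> E - D"
    using C by (auto simp: circuit_def)
  then have "e \<in> closure (E - D)"
    using circuit_in_closure[OF C] closure_mono CD by blast
  with cocircuit_notin_closure[OF D] CD show False
    by blast
qed

lemma two_le_card_circuit_Int_cocircuit:
  assumes C: "circuit E I C" and D: "cocircuit E I D" and "C \<inter> D \<noteq> {}"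
  shows "2 \<le> card (C \<inter> D)"
proof -
  obtain x where "x \<in> C \<inter> D"
    using \<open>C \<inter> D \<noteq> {}\<close> by blast
  moreover have "C \<inter> D \<noteq> {x}"
    by (rule circuit_Int_cocircuit_not_singleton[OF C D])
  ultimately obtain y where "y \<in> C \<inter> D" "y \<noteq> x"
    by blast
  moreover have "finite C"
    using C finite_subset_E by (auto simp: circuit_def)
  ultimately have "card {x, y} \<le> card (C \<inter> D)"
    using \<open>x \<in> C \<inter> D\<close> by (intro card_mono) auto
  with \<open>y \<noteq> x\<close> show ?thesis
    by simp
qed

lemma notin_closure_basis_Diff:
  assumes "basis I B" "e \<in> B"
  shows "e \<notin> closure (B - {e})"
proof -
  have "B \<in> I" "B - {e} \<in> I" "e \<in> E"
    using assms basis_indep indep_subset indep_subset_E by blast+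
  then show ?thesis
    using notin_closure_iff[of "B - {e}" "B - {e}" e] rank_indep \<open>e \<in> B\<close>
    by (simp add: insert_absorb)
qed

lemma cocircuit_Diff_closure_basis:
  assumes B: "basis I B" "e \<in> B"
  shows "cocircuit E I (E - closure (B - {e}))"
proof -
  define H where "H = closure (B - {e})"
  have BI: "B \<in> I" and cardB: "card B = rank E" and Be: "B - {e} \<in> I"
    using B by (auto simp: basis_iff_card intro: indep_subset)
  have "H \<subseteq> E"
    unfolding H_def by (rule closure_subset_E)
  have BH: "B - {e} \<subseteq> H"
    unfolding H_def using indep_subset_E[OF Be] by (rule subset_closure)
  have "0 < rank E"
    using B(2) indep_finite[OF BI] cardB[symmetric] by (auto simp: card_gt_0_iff)
  have "rank H = rank E - 1"
    using rank_closure[OF indep_subset_E[OF Be]] rank_indep[OF Be] cardB B(2) indep_finite[OF BI]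
    by (simp add: H_def)
  then have "E - H \<notin> dual_indep E I"
    using \<open>H \<subseteq> E\<close> \<open>0 < rank E\<close> by (simp add: dual_indep_iff Diff_Diff_Int Int_absorb1)
  moreover have "D' \<in> dual_indep E I" if "D' \<subset> E - H" for D'
  proof -
    obtain d where d: "d \<in> E" "d \<notin> H" "d \<notin> D'"
      using \<open>D' \<subset> E - H\<close> by blast
    have "d \<notin> B - {e}"
      using d BH by blast
    have "insert d (B - {e}) \<in> I"
      using d insert_indep_if_notin_closure[OF Be] by (simp add: H_def)
    moreover have "card (insert d (B - {e})) = rank E"
      using \<open>d \<notin> B - {e}\<close> \<open>0 < rank E\<close> cardB B(2) indep_finite[OF BI]
      by (simp add: card_Suc_Diff1)
    moreover have "insert d (B - {e}) \<subseteq> E - D'"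
      using d BH \<open>H \<subseteq> E\<close> \<open>D' \<subset> E - H\<close> by blast
    ultimately show ?thesis
      using \<open>D' \<subset> E - H\<close> dual_indep_if_disjoint_basis[of D'] by blast
  qed
  ultimately show ?thesis
    unfolding H_def cocircuit_def circuit_def by blast
qed

lemma obtain_cocircuit_avoiding:
  assumes "A \<subseteq> E" "e \<in> E" "e \<notin> closure A"
  obtains D where "cocircuit E I D" "e \<in> D" "D \<inter> A = {}"
proof -
  obtain J where J: "J \<subseteq> A" "J \<in> I" "card J = rank A"
    by (rule obtain_rank_indep)
  then have "e \<notin> A" "insert e J \<in> I"
    using notin_closure_iff assms(2,3) by blast+
  from \<open>insert e J \<in> I\<close> obtain B where B: "basis I B" "insert e J \<subseteq> B"
    by (rule obtain_basis_superset)
  have "A \<subseteq> closure J"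
    using J assms(1) by (rule subset_closure_if_rank_indep)
  also have "\<dots> \<subseteq> closure (B - {e})"
    using B(2) \<open>e \<notin> A\<close> J(1) by (intro closure_mono) blast
  finally have "A \<subseteq> closure (B - {e})" .
  moreover have "e \<notin> closure (B - {e})"
    using B by (intro notin_closure_basis_Diff) auto
  ultimately show ?thesis
    using that cocircuit_Diff_closure_basis[OF B(1)] B(2) \<open>e \<in> E\<close> by blast
qed

lemma cocircuit_elimination:
  assumes D1: "cocircuit E I D1" and D2: "cocircuit E I D2"
    and s: "s \<in> D1" "s \<in> D2" and e: "e \<in> D1" "e \<notin> D2"
  obtains D where "cocircuit E I D" "e \<in> D" "D \<subseteq> (D1 \<union> D2) - {s}"
proof -
  define F where "F = E - (D1 \<union> D2)"
  have "e \<in> E" "s \<in> E"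
    using cocircuit_subset_E[OF D1] e s by blast+
  have "e \<notin> closure F"
    using cocircuit_notin_closure[OF D1 e(1)] closure_mono[of F "E - D1"] by (auto simp: F_def)
  have "e \<notin> closure (insert s F)"
  proof
    assume "e \<in> closure (insert s F)"
    then have "s \<in> closure (insert e F)"
      using closure_exchange[OF \<open>s \<in> E\<close>] \<open>e \<notin> closure F\<close> by blast
    also have "\<dots> \<subseteq> closure (E - D2)"
      using \<open>e \<in> E\<close> e(2) by (intro closure_mono) (auto simp: F_def)
    finally show False
      using cocircuit_notin_closure[OF D2 s(2)] by blast
  qed
  moreover have "insert s F \<subseteq> E"
    using \<open>s \<in> E\<close> by (auto simp: F_def)
  ultimately obtain D where "cocircuit E I D" "e \<in> D" "D \<inter> insert s F = {}"
    using obtain_cocircuit_avoiding \<open>e \<in> E\<close> by blast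
  moreover from this have "D \<subseteq> (D1 \<union> D2) - {s}"
    using cocircuit_subset_E by (auto simp: F_def)
  ultimately show ?thesis
    using that by blast
qed

section \<open>Disjoint cocircuits from a sunflower\<close>

definition sparse_cocircuits :: "'a set \<Rightarrow> nat \<Rightarrow> 'a set set \<Rightarrow> bool" where
  "sparse_cocircuits S b DD \<longleftrightarrow> finite DD
     \<and> (\<forall>D\<in>DD. cocircuit E I D \<and> card D \<le> b \<and> \<not> D \<subseteq> S)
     \<and> (\<forall>D\<in>DD. \<forall>D'\<in>DD. D \<noteq> D' \<longrightarrow> D \<inter> D' \<subseteq> S)"

lemma sparse_cocircuits_subset:
  "sparse_cocircuits S b DD \<Longrightarrow> DD' \<subseteq> DD \<Longrightarrow> sparse_cocircuits S b DD'"
  unfolding sparse_cocircuits_def by (meson finite_subset subsetD)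

lemma sparse_cocircuits_mono:
  "sparse_cocircuits S b DD \<Longrightarrow> b \<le> b' \<Longrightarrow> sparse_cocircuits S b' DD"
  unfolding sparse_cocircuits_def by (meson le_trans)

lemma sparse_cocircuits_avoiding:
  "sparse_cocircuits S b DD \<Longrightarrow> sparse_cocircuits (S - {s}) b {D \<in> DD. s \<notin> D}"
  unfolding sparse_cocircuits_def by auto

lemma sparse_cocircuits_eliminate_pair:
  assumes sparse: "sparse_cocircuits S b DD" and AB: "A \<in> DD" "B \<in> DD" "A \<noteq> B"
    and s: "s \<in> A" "s \<in> B"
  obtains D where "cocircuit E I D" "D \<subseteq> (A \<union> B) - {s}" "\<not> D \<subseteq> S" "card D \<le> 2 * b"
proof -
  have A: "cocircuit E I A" "card A \<le> b" "\<not> A \<subseteq> S"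
    and B: "cocircuit E I B" "card B \<le> b" and "A \<inter> B \<subseteq> S"
    using sparse AB by (auto simp: sparse_cocircuits_def)
  then obtain x where x: "x \<in> A" "x \<notin> S" "x \<notin> B"
    by blast
  from A(1) B(1) s x(1,3) obtain D where D: "cocircuit E I D" "x \<in> D" "D \<subseteq> (A \<union> B) - {s}"
    by (rule cocircuit_elimination)
  have "card D \<le> card (A \<union> B)"
    using D(3) A(1) B(1) cocircuit_subset_E by (intro card_mono finite_subset_E) auto
  also have "\<dots> \<le> 2 * b"
    using card_Un_le[of A B] A(2) B(2) by simp
  finally show ?thesis
    using that D x(2) by blast
qed

text \<open>Pair up the members through \<open>s\<close> and eliminate \<open>s\<close> from each pair; the new cocircuits
  lie in the unions of disjoint pairs, so they still meet only inside \<open>S\<close>.\<close>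
lemma sparse_cocircuits_eliminate:
  assumes sparse: "sparse_cocircuits S b DD" and s: "\<And>D. D \<in> DD \<Longrightarrow> s \<in> D"
    and "2 * m \<le> card DD"
  shows "\<exists>DD'. sparse_cocircuits (S - {s}) (2 * b) DD' \<and> card DD' = m"
proof -
  have fin: "finite DD"
    and meet: "\<And>D D'. D \<in> DD \<Longrightarrow> D' \<in> DD \<Longrightarrow> D \<noteq> D' \<Longrightarrow> D \<inter> D' \<subseteq> S"
    using sparse by (auto simp: sparse_cocircuits_def)
  obtain P g where P: "P \<subseteq> DD" "card P = m" and g: "inj_on g P" "g ` P \<subseteq> DD - P"
    using fin \<open>2 * m \<le> card DD\<close> by (rule obtain_pairing)
  have pair_meet: "(A \<union> g A) \<inter> (A' \<union> g A') \<subseteq> S" if "A \<in> P" "A' \<in> P" "A \<noteq> A'" for A A'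
  proof -
    have "g A \<in> DD - P" "g A' \<in> DD - P" "A \<in> DD" "A' \<in> DD"
      using that P(1) g(2) by auto
    moreover have "g A \<noteq> g A'"
      using that g(1) by (auto dest: inj_onD)
    ultimately have "A \<inter> A' \<subseteq> S" "A \<inter> g A' \<subseteq> S" "g A \<inter> A' \<subseteq> S" "g A \<inter> g A' \<subseteq> S"
      using that meet by (metis DiffD1 DiffD2)+
    then show ?thesis
      by blast
  qed
  have "\<exists>D. cocircuit E I D \<and> D \<subseteq> (A \<union> g A) - {s} \<and> \<not> D \<subseteq> S \<and> card D \<le> 2 * b"
    if "A \<in> P" for A
  proof -
    have "A \<in> DD" "g A \<in> DD" "A \<noteq> g A"
      using that P(1) g(2) by auto
    moreover from this have "s \<in> A" "s \<in> g A"
      using s by blast+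
    ultimately obtain D where "cocircuit E I D" "D \<subseteq> (A \<union> g A) - {s}" "\<not> D \<subseteq> S" "card D \<le> 2 * b"
      by (rule sparse_cocircuits_eliminate_pair[OF sparse])
    then show ?thesis
      by blast
  qed
  then obtain D' where D': "\<And>A. A \<in> P \<Longrightarrow>
      cocircuit E I (D' A) \<and> D' A \<subseteq> (A \<union> g A) - {s} \<and> \<not> D' A \<subseteq> S \<and> card (D' A) \<le> 2 * b"
    by metis
  have meet': "D' A \<inter> D' A' \<subseteq> S - {s}" if "A \<in> P" "A' \<in> P" "A \<noteq> A'" for A A'
    using D'[OF that(1)] D'[OF that(2)] pair_meet[OF that] by blast
  have "inj_on D' P"
  proof (rule inj_onI, rule ccontr)
    fix A A' assume A: "A \<in> P" "A' \<in> P" "D' A = D' A'" "A \<noteq> A'"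
    then have "D' A \<subseteq> S"
      using meet'[OF A(1,2,4)] by auto
    with D'[OF A(1)] show False
      by blast
  qed
  then have "card (D' ` P) = m"
    using P(2) by (simp add: card_image)
  moreover have "sparse_cocircuits (S - {s}) (2 * b) (D' ` P)"
    unfolding sparse_cocircuits_def
    using finite_subset[OF P(1) fin] D' meet' by blast
  ultimately show ?thesis
    by blast
qed

lemma sparse_cocircuits_remove_point:
  assumes sparse: "sparse_cocircuits S b DD" and "4 * m \<le> card DD"
  shows "\<exists>DD'. sparse_cocircuits (S - {s}) (2 * b) DD' \<and> card DD' = m"
proof -
  let ?Out = "{D \<in> DD. s \<notin> D}" and ?In = "{D \<in> DD. s \<in> D}"
  show ?thesis
  proof (cases "m \<le> card ?Out")
    case True
    then obtain DD' where "DD' \<subseteq> ?Out" "card DD' = m"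
      using obtain_subset_with_card_n[of m ?Out] by auto
    moreover have "sparse_cocircuits (S - {s}) (2 * b) ?Out"
      using sparse_cocircuits_avoiding[OF sparse] by (rule sparse_cocircuits_mono) simp
    ultimately show ?thesis
      using sparse_cocircuits_subset by blast
  next
    case False
    have "finite DD"
      using sparse by (simp add: sparse_cocircuits_def)
    then have "card (?In \<union> ?Out) = card ?In + card ?Out"
      by (intro card_Un_disjoint) auto
    moreover have "?In \<union> ?Out = DD"
      by blast
    ultimately have "2 * m \<le> card ?In"
      using False \<open>4 * m \<le> card DD\<close> by simp
    moreover have "sparse_cocircuits S b ?In"
      using sparse by (rule sparse_cocircuits_subset) blast
    ultimately show ?thesis
      using sparse_cocircuits_eliminate[of S b ?In s] by blast
  qed
qed

lemma sparse_cocircuits_disjoint: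
  assumes "sparse_cocircuits S b DD" "finite S" "card S \<le> s" "p * 4 ^ s \<le> card DD"
  shows "\<exists>DD'. sparse_cocircuits {} (2 ^ s * b) DD' \<and> card DD' = p"
  using assms
proof (induction s arbitrary: S b DD)
  case 0
  then obtain DD' where "DD' \<subseteq> DD" "card DD' = p"
    using obtain_subset_with_card_n[of p DD] by auto
  with 0 show ?case
    by (auto intro: sparse_cocircuits_subset)
next
  case (Suc s)
  obtain s0 where S0: "finite (S - {s0})" "card (S - {s0}) \<le> s"
  proof (cases "S = {}")
    case False
    then obtain s0 where "s0 \<in> S"
      by blast
    with Suc.prems(2,3) that[of s0] show ?thesis
      by auto
  qed (use that in simp)
  obtain DD' where "sparse_cocircuits (S - {s0}) (2 * b) DD'" "card DD' = p * 4 ^ s"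
    using sparse_cocircuits_remove_point[OF Suc.prems(1), of "p * 4 ^ s" s0] Suc.prems(4)
    by (auto simp: mult.left_commute)
  with Suc.IH[OF _ S0] obtain DD'' where "sparse_cocircuits {} (2 ^ s * (2 * b)) DD''" "card DD'' = p"
    by (metis order_refl)
  then show ?case
    by (auto simp: mult.assoc mult.left_commute)
qed

lemma sparse_cocircuits_empty_iff:
  "sparse_cocircuits {} b DD \<longleftrightarrow>
     finite DD \<and> pairwise disjnt DD \<and> (\<forall>D\<in>DD. cocircuit E I D \<and> card D \<le> b)"
  using cocircuit_nonempty by (fastforce simp: sparse_cocircuits_def pairwise_def disjnt_def)

lemma disjoint_cocircuits_if_many_small:
  assumes many: "fact l * (p * 4 ^ l + 1) ^ l < card {D. cocircuit E I D \<and> card D \<le> l}"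
  shows "\<exists>DD. sparse_cocircuits {} (2 ^ l * l) DD \<and> card DD = p"
proof -
  let ?F = "{D. cocircuit E I D \<and> card D \<le> l}"
  have "finite ?F"
    by (rule finite_subset[of _ "Pow E"]) (auto simp: finite_E dest: cocircuit_subset_E)
  moreover have "finite D \<and> card D \<le> l" if "D \<in> ?F" for D
    using that cocircuit_subset_E finite_subset_E by blast
  ultimately obtain S P where P: "P \<subseteq> ?F" "card P = p * 4 ^ l + 1" "sunflower S P"
    using sunflower_lemma[OF _ _ many] by blast
  then obtain D0 where "D0 \<in> P"
    by fastforce
  then have S: "finite S" "card S \<le> l"
    using P cocircuit_subset_E finite_subset_E card_mono[of D0 S]
    by (fastforce simp: sunflower_def)+
  have "sparse_cocircuits S l (P - {S})"
    using P finite_subset[OF P(1) \<open>finite ?F\<close>]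
    by (auto simp: sparse_cocircuits_def sunflower_def)
  moreover have "p * 4 ^ l \<le> card (P - {S})"
    using P(2) by (simp add: card_Diff_singleton_if)
  ultimately show ?thesis
    using sparse_cocircuits_disjoint[OF _ S] by blast
qed

section \<open>Bounding the ground set\<close>

lemma card_le_rank_mult_if_cocircuit_cover:
  assumes cover: "\<And>x. x \<in> E \<Longrightarrow> \<exists>D. cocircuit E I D \<and> x \<in> D \<and> card D \<le> l"
    and "F \<subseteq> E"
  shows "card F \<le> rank F * l"
  using \<open>F \<subseteq> E\<close>
proof (induction "rank F" arbitrary: F rule: less_induct)
  case less
  show ?case
  proof (cases "F = {}")
    case False
    then obtain x where "x \<in> F"
      by blast
    with less.prems cover obtain D where D: "cocircuit E I D" "x \<in> D" "card D \<le> l"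
      by blast
    have "x \<notin> closure (F - D)"
      using cocircuit_notin_closure[OF D(1,2)] closure_mono[of "F - D" "E - D"] less.prems by blast
    then have "rank (F - D) < rank (insert x (F - D))"
      using rank_mono[OF subset_insertI, of "F - D" x] \<open>x \<in> F\<close> less.prems
      by (auto simp: closure_def)
    also have "\<dots> \<le> rank F"
      using \<open>x \<in> F\<close> by (intro rank_mono) blast
    finally have lt: "rank (F - D) < rank F" .
    have "card F \<le> card ((F - D) \<union> D)"
      using less.prems cocircuit_subset_E[OF D(1)] by (intro card_mono finite_subset_E) auto
    also have "\<dots> \<le> card (F - D) + card D"
      by (rule card_Un_le)
    also have "\<dots> \<le> rank (F - D) * l + l"
      using less.hyps[OF lt] less.prems D(3) by (simp add: subset_iff add_mono)
    also have "\<dots> \<le> rank F * l"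
      using lt mult_le_mono1[of "Suc (rank (F - D))" "rank F" l] by simp
    finally show ?thesis .
  qed simp
qed

text \<open>A circuit through \<open>f\<close> and a transversal of the cocircuits meets every cocircuit twice, so
  if it had a point outside \<open>f\<close> and the cocircuits it would have at least \<open>2 * t\<close> elements.\<close>
lemma closure_Union_disjoint_cocircuits:
  assumes circ: "\<And>X. X \<subseteq> E \<Longrightarrow> card X = t \<Longrightarrow> \<exists>C. circuit E I C \<and> X \<subseteq> C \<and> card C < 2 * t"
    and DD: "finite DD" "card DD + 1 = t" "\<And>D. D \<in> DD \<Longrightarrow> cocircuit E I D" "pairwise disjnt DD"
  shows "E \<subseteq> closure (\<Union>DD)"
proof
  fix f assume "f \<in> E"
  have UE: "\<Union>DD \<subseteq> E"
    using DD(3) cocircuit_subset_E by blast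
  show "f \<in> closure (\<Union>DD)"
  proof (cases "f \<in> \<Union>DD")
    case True
    then show ?thesis using subset_closure[OF UE] by blast
  next
    case False
    have "{} \<notin> DD"
      using DD(3) cocircuit_nonempty by blast
    then obtain T where T: "T \<subseteq> \<Union>DD" "card T = card DD" "\<forall>D\<in>DD. T \<inter> D \<noteq> {}"
      using ex_transversal[OF DD(1,4)] by blast
    have "T \<subseteq> E" "f \<notin> T"
      using T(1) UE False by blast+
    then have "card (insert f T) = t"
      using T(2) DD(2) finite_subset_E by simp
    moreover have "insert f T \<subseteq> E"
      using \<open>f \<in> E\<close> T(1) UE by blast
    ultimately obtain C where C: "circuit E I C" "insert f T \<subseteq> C" "card C < 2 * t"
      using circ by blast
    have finC: "finite C"
      using C(1) finite_subset_E by (auto simp: circuit_def)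
    have two: "2 \<le> card (C \<inter> D)" if "D \<in> DD" for D
      using two_le_card_circuit_Int_cocircuit[OF C(1) DD(3)[OF that]] T(3) that C(2) by blast
    have "C - {f} \<subseteq> \<Union>DD"
    proof (rule ccontr)
      assume "\<not> C - {f} \<subseteq> \<Union>DD"
      then obtain z where z: "z \<in> C" "z \<noteq> f" "z \<notin> \<Union>DD"
        by blast
      have "2 * card DD + 2 \<le> (\<Sum>D\<in>DD. card (C \<inter> D)) + 2"
        using sum_mono[OF two] by (simp add: mult.commute)
      also have "\<dots> = card (\<Union>D\<in>DD. C \<inter> D) + 2"
        using DD(1,4) finC by (subst card_UN_disjoint) (auto simp: pairwise_def disjnt_def)
      also have "\<dots> = card (insert f (insert z (\<Union>D\<in>DD. C \<inter> D)))"
        using False z finC by simp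
      also have "\<dots> \<le> card C"
        using C(2) z finC by (intro card_mono) auto
      finally show False
        using C(3) DD(2) by simp
    qed
    then show ?thesis
      using circuit_in_closure[OF C(1)] C(2) closure_mono by blast
  qed
qed

lemma card_E_le_if_small_circuits_and_cocircuits:
  assumes circ: "\<And>X. X \<subseteq> E \<Longrightarrow> card X = t \<Longrightarrow> \<exists>C. circuit E I C \<and> X \<subseteq> C \<and> card C < 2 * t"
    and cover: "\<And>x. x \<in> E \<Longrightarrow> \<exists>D. cocircuit E I D \<and> x \<in> D \<and> card D \<le> l"
    and "0 < t"
  shows "card E \<le> max (fact l * ((t - 1) * 4 ^ l + 1) ^ l * l) ((t - 1) * (2 ^ l * l) * l)"
proof (cases "card {D. cocircuit E I D \<and> card D \<le> l} \<le> fact l * ((t - 1) * 4 ^ l + 1) ^ l")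
  case True
  let ?F = "{D. cocircuit E I D \<and> card D \<le> l}"
  have "card E \<le> card (\<Union>?F)"
    using cover cocircuit_subset_E by (intro card_mono finite_subset_E) blast+
  also have "\<dots> \<le> (\<Sum>D\<in>?F. card D)"
    by (rule card_Union_le_sum_card)
  also have "\<dots> \<le> card ?F * l"
    using sum_bounded_above[of ?F card l] by simp
  also have "\<dots> \<le> fact l * ((t - 1) * 4 ^ l + 1) ^ l * l"
    using True by (rule mult_le_mono1)
  finally show ?thesis
    by (rule max.coboundedI1)
next
  case False
  then obtain DD where DD: "finite DD" "pairwise disjnt DD" "card DD = t - 1"
    "\<And>D. D \<in> DD \<Longrightarrow> cocircuit E I D \<and> card D \<le> 2 ^ l * l"
    using disjoint_cocircuits_if_many_small[of l "t - 1"] by (auto simp: sparse_cocircuits_empty_iff)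
  have "E \<subseteq> closure (\<Union>DD)"
    using DD \<open>0 < t\<close> by (intro closure_Union_disjoint_cocircuits[OF circ]) auto
  then have "rank E \<le> rank (\<Union>DD)"
    using rank_mono rank_closure DD(4) cocircuit_subset_E by (metis Union_least)
  also have "\<dots> \<le> card (\<Union>DD)"
    using DD cocircuit_subset_E by (intro rank_le_card finite_subset_E) blast
  also have "\<dots> \<le> (\<Sum>D\<in>DD. card D)"
    by (rule card_Union_le_sum_card)
  also have "\<dots> \<le> (t - 1) * (2 ^ l * l)"
    using sum_bounded_above[of DD card "2 ^ l * l"] DD by simp
  finally have "card E \<le> (t - 1) * (2 ^ l * l) * l"
    using card_le_rank_mult_if_cocircuit_cover[OF cover subset_refl] mult_le_mono1 le_trans by blast
  then show ?thesis
    by (simp only: le_max_iff_disj simp_thms)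
qed

lemma card_E_le_if_tl_property:
  assumes tl: "tl_property t1 l1 t2 l2 E I" and "0 < t1" "0 < t2" "l1 < 2 * t1"
  shows "card E \<le> max t2 (max (fact l2 * ((t1 - 1) * 4 ^ l2 + 1) ^ l2 * l2)
                                ((t1 - 1) * (2 ^ l2 * l2) * l2))"
proof (cases "card E < t2")
  case False
  have circ: "\<And>X. X \<subseteq> E \<Longrightarrow> card X = t1 \<Longrightarrow> \<exists>C. circuit E I C \<and> card C = l1 \<and> X \<subseteq> C"
    and cocirc: "\<And>X. X \<subseteq> E \<Longrightarrow> card X = t2 \<Longrightarrow> \<exists>D. cocircuit E I D \<and> card D = l2 \<and> X \<subseteq> D"
    using tl by (simp_all add: tl_property_def)
  have "\<exists>D. cocircuit E I D \<and> x \<in> D \<and> card D \<le> l2" if "x \<in> E" for x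
  proof -
    have "t2 - 1 \<le> card (E - {x})"
      using False that finite_E by (simp add: card_Diff_singleton)
    then obtain T where "T \<subseteq> E - {x}" "card T = t2 - 1"
      by (rule obtain_subset_with_card_n)
    moreover have "finite T" "x \<notin> T"
      using \<open>T \<subseteq> E - {x}\<close> finite_subset_E by blast+
    ultimately have "card (insert x T) = t2"
      using \<open>0 < t2\<close> by simp
    moreover have "insert x T \<subseteq> E"
      using \<open>T \<subseteq> E - {x}\<close> that by blast
    ultimately show ?thesis
      using cocirc by blast
  qed
  moreover have "\<exists>C. circuit E I C \<and> X \<subseteq> C \<and> card C < 2 * t1" if "X \<subseteq> E" "card X = t1" for X
    using circ[OF that] \<open>l1 < 2 * t1\<close> by auto
  ultimately show ?thesis
    using card_E_le_if_small_circuits_and_cocircuits \<open>0 < t1\<close> by (blast intro: max.coboundedI2)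
qed (rule max.coboundedI1, simp)

end

lemma tl_property_card_bounded:
  assumes "0 < t1" "0 < t2" and "l1 < 2 * t1 \<or> l2 < 2 * t2"
  shows "\<exists>N. \<forall>(E :: 'a set) I. matroid E I \<and> tl_property t1 l1 t2 l2 E I \<longrightarrow> card E \<le> N"
  using assms(3)
proof
  assume "l1 < 2 * t1"
  then show ?thesis
    using matroid_on.card_E_le_if_tl_property[OF matroid_on.intro] assms(1,2) by blast
next
  assume "l2 < 2 * t2"
  have "matroid_on E (dual_indep E I) \<and> tl_property t2 l2 t1 l1 E (dual_indep E I)"
    if "matroid E I" "tl_property t1 l1 t2 l2 E I" for E :: "'a set" and I
  proof -
    interpret matroid_on E I
      using that(1) by (rule matroid_on.intro)
    show ?thesis
      using matroid_dual tl_property_dual[OF that(2)] by (simp add: matroid_on_def)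
  qed
  then show ?thesis
    using matroid_on.card_E_le_if_tl_property \<open>l2 < 2 * t2\<close> assms(1,2) by blast
qed

lemma matroid_iso_initial_segment:
  assumes "finite E" "I \<subseteq> Pow E"
  shows "\<exists>I' \<subseteq> Pow {0..<card E}. matroid_iso E I {0..<card E} I'"
proof -
  obtain h where h: "bij_betw h E {0..<card E}"
    using ex_bij_betw_finite_nat[OF assms(1)] by blast
  have "image h ` I \<subseteq> Pow {0..<card E}"
    using h assms(2) by (auto simp: bij_betw_def)
  moreover have "X \<in> I \<longleftrightarrow> h ` X \<in> image h ` I" if "X \<subseteq> E" for X
    using that assms(2) bij_betw_imp_inj_on[OF h] by (auto simp: inj_on_image_eq_iff)
  ultimately show ?thesis
    using h unfolding matroid_iso_def by blast
qed

lemma finite_iso_classes_if_card_bounded: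
  fixes P :: "'a set \<Rightarrow> 'a set set \<Rightarrow> bool"
  assumes "\<And>E I. P E I \<Longrightarrow> matroid E I" and "\<And>E I. P E I \<Longrightarrow> card E \<le> N"
  shows "\<exists>S :: (nat set \<times> nat set set) set. finite S \<and>
           (\<forall>E I. P E I \<longrightarrow> (\<exists>(E', I') \<in> S. matroid_iso E I E' I'))"
proof (intro exI conjI allI impI)
  let ?S = "Pow {0..<N} \<times> Pow (Pow {0..<N})"
  show "finite ?S"
    by simp
  fix E I assume "P E I"
  then obtain I' where "I' \<subseteq> Pow {0..<card E}" "matroid_iso E I {0..<card E} I'"
    using assms matroid_iso_initial_segment by (metis matroid_def)
  moreover have "{0..<card E} \<subseteq> {0..<N}"
    using assms(2)[OF \<open>P E I\<close>] by auto
  ultimately show "\<exists>(E', I') \<in> ?S. matroid_iso E I E' I'"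
    by blast
qed

theorem theorem3p3:
  fixes t1 l1 t2 l2 :: nat
  assumes "0 < t1" "0 < l1" "0 < t2" "0 < l2"
    and "l1 < 2 * t1 \<or> l2 < 2 * t2"
  shows "\<exists>S :: (nat set \<times> nat set set) set. finite S \<and>
           (\<forall>(E :: 'a set) I. matroid E I \<and> tl_property t1 l1 t2 l2 E I \<longrightarrow>
              (\<exists>(E', I') \<in> S. matroid_iso E I E' I'))"
proof -
  obtain N where "\<forall>(E :: 'a set) I. matroid E I \<and> tl_property t1 l1 t2 l2 E I \<longrightarrow> card E \<le> N"
    using tl_property_card_bounded assms(1,3,5) by blast
  then show ?thesis
    using finite_iso_classes_if_card_bounded[of "\<lambda>E I. matroid E I \<and> tl_property t1 l1 t2 l2 E I"]
    by blast
qed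

end
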